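(* Let $T\in S(\lambda,\mu)$ be any semistandard Young tableau and let $m_T=\deg\chi^T(q)$. Then $\chi^T(q)$ is a palindromic polynomial; that is, $|S_k^T(\lambda,\mu)|=|S_{m_T-k}^T(\lambda,\mu)|$ for all $k$.
   Context: A shape is a partition $\lambda=(\lambda_1\ge\dots\ge\lambda_m\ge1)$ with $\lambda_i$ left-justified boxes in row $i$. A content is $\mu=(\mu_1,\dots,\mu_M)$, all $\mu_i\ge1$, $\sum\mu_i=\sum\lambda_i$. A filling of shape $\lambda$ and content $\mu$ assigns positive integers so that value $v$ occurs exactly $\mu_v$ times; row-standard means strictly increasing along rows. $S(\lambda,\mu)$: row-standard fillings with weakly increasing columns. Inversion pairs of a row-standard $\tau$: for a box $c$ and $r\ge1$ let $c^{(r)}$ be the box $r$ positions to its right, if it exists. For distinct boxes $c,c'$ in the same column with $\tau(c)<\tau(c')$, let $r\ge1$ be least such that one of $c^{(r)},c'^{(r)}$ does not exist or both exist with $\tau(c^{(r)})\ne\tau(c'^{(r)})$. $(c,c')$ is an inversion pair if either (one does not exist and $c$ lies below $c'$) or (both exist and $\tau(c^{(r)})>\tau(c'^{(r)})$). $S_k(\lambda,\mu)$: row-standard fillings with exactly $k$ inversion pairs (counted as pairs of boxes). $\mathrm{st}(\tau)$: sort each column weakly increasingly; $S_k^T(\lambda,\mu)=\{\tau\in S_k(\lambda,\mu):\mathrm{st}(\tau)=T\}$; $\chi^T(q)=\sum_k|S_k^T(\lambda,\mu)|q^k$. *)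

theory Defs
  imports Main "HOL-Computational_Algebra.Polynomial"
begin

text \<open>Boxes are pairs (row, column), 0-indexed, rows numbered from the top.
  A shape is a list of row lengths; a content is a list mu with mu ! (v-1) = multiplicity of v.\<close>

definition is_shape :: "nat list \<Rightarrow> bool" where
  "is_shape lam \<longleftrightarrow> sorted_wrt (\<ge>) lam \<and> (\<forall>x\<in>set lam. x \<ge> 1)"

definition is_content :: "nat list \<Rightarrow> nat list \<Rightarrow> bool" where
  "is_content lam mu \<longleftrightarrow> (\<forall>x\<in>set mu. x \<ge> 1) \<and> sum_list mu = sum_list lam"

definition box :: "nat list \<Rightarrow> nat \<times> nat \<Rightarrow> bool" where
  "box lam c \<longleftrightarrow> fst c < length lam \<and> snd c < lam ! fst c"

definition boxes :: "nat list \<Rightarrow> (nat \<times> nat) set" where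
  "boxes lam = {c. box lam c}"

definition fillings :: "nat list \<Rightarrow> nat list \<Rightarrow> (nat \<times> nat \<Rightarrow> nat) set" where
  "fillings lam mu = {\<tau>. (\<forall>c. \<not> box lam c \<longrightarrow> \<tau> c = 0)
      \<and> (\<forall>c. box lam c \<longrightarrow> \<tau> c \<in> {1..length mu})
      \<and> (\<forall>v\<in>{1..length mu}. card {c. box lam c \<and> \<tau> c = v} = mu ! (v - 1))}"

definition row_standard :: "nat list \<Rightarrow> (nat \<times> nat \<Rightarrow> nat) \<Rightarrow> bool" where
  "row_standard lam \<tau> \<longleftrightarrow>
     (\<forall>i j. box lam (i, Suc j) \<longrightarrow> \<tau> (i, j) < \<tau> (i, Suc j))"

definition col_weak :: "nat list \<Rightarrow> (nat \<times> nat \<Rightarrow> nat) \<Rightarrow> bool" where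
  "col_weak lam \<tau> \<longleftrightarrow>
     (\<forall>i j. box lam (Suc i, j) \<longrightarrow> \<tau> (i, j) \<le> \<tau> (Suc i, j))"

definition SSYT :: "nat list \<Rightarrow> nat list \<Rightarrow> (nat \<times> nat \<Rightarrow> nat) set" where
  "SSYT lam mu = {\<tau> \<in> fillings lam mu. row_standard lam \<tau> \<and> col_weak lam \<tau>}"

definition right :: "nat \<Rightarrow> nat \<times> nat \<Rightarrow> nat \<times> nat" where
  "right r c = (fst c, snd c + r)"

definition differs :: "nat list \<Rightarrow> (nat \<times> nat \<Rightarrow> nat) \<Rightarrow> nat \<times> nat \<Rightarrow> nat \<times> nat \<Rightarrow> nat \<Rightarrow> bool" where
  "differs lam \<tau> c c' r \<longleftrightarrow> \<not> box lam (right r c) \<or> \<not> box lam (right r c')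
      \<or> \<tau> (right r c) \<noteq> \<tau> (right r c')"

definition inv_pair :: "nat list \<Rightarrow> (nat \<times> nat \<Rightarrow> nat) \<Rightarrow> nat \<times> nat \<Rightarrow> nat \<times> nat \<Rightarrow> bool" where
  "inv_pair lam \<tau> c c' \<longleftrightarrow> box lam c \<and> box lam c' \<and> c \<noteq> c' \<and> snd c = snd c' \<and> \<tau> c < \<tau> c' \<and>
     (let r = (LEAST r. r \<ge> 1 \<and> differs lam \<tau> c c' r) in
        ((\<not> box lam (right r c) \<or> \<not> box lam (right r c')) \<and> fst c > fst c')
      \<or> (box lam (right r c) \<and> box lam (right r c') \<and> \<tau> (right r c) > \<tau> (right r c')))"

definition inv_count :: "nat list \<Rightarrow> (nat \<times> nat \<Rightarrow> nat) \<Rightarrow> nat" where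
  "inv_count lam \<tau> = card {(c, c'). inv_pair lam \<tau> c c'}"

definition S_k :: "nat list \<Rightarrow> nat list \<Rightarrow> nat \<Rightarrow> (nat \<times> nat \<Rightarrow> nat) set" where
  "S_k lam mu k = {\<tau> \<in> fillings lam mu. row_standard lam \<tau> \<and> inv_count lam \<tau> = k}"

text \<open>Column sorting: column j occupies rows 0..h_j-1, h_j = number of rows of length > j.\<close>
definition col_height :: "nat list \<Rightarrow> nat \<Rightarrow> nat" where
  "col_height lam j = length (filter (\<lambda>l. j < l) lam)"

definition st :: "nat list \<Rightarrow> (nat \<times> nat \<Rightarrow> nat) \<Rightarrow> (nat \<times> nat \<Rightarrow> nat)" where
  "st lam \<tau> = (\<lambda>(i, j). if box lam (i, j)
       then sort (map (\<lambda>i'. \<tau> (i', j)) [0..<col_height lam j]) ! i else 0)"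

definition S_k_T :: "nat list \<Rightarrow> nat list \<Rightarrow> (nat \<times> nat \<Rightarrow> nat) \<Rightarrow> nat \<Rightarrow> (nat \<times> nat \<Rightarrow> nat) set" where
  "S_k_T lam mu T k = {\<tau> \<in> S_k lam mu k. st lam \<tau> = T}"

text \<open>chi^T(q) = sum_k |S_k^T| q^k (inversion counts are bounded by the number of box pairs).\<close>
definition chi :: "nat list \<Rightarrow> nat list \<Rightarrow> (nat \<times> nat \<Rightarrow> nat) \<Rightarrow> nat poly" where
  "chi lam mu T = (\<Sum>k\<le>(sum_list lam)^2. monom (card (S_k_T lam mu T k)) k)"

end

theory Submission
  imports Defs "HOL-Library.List_Lexorder" "HOL-Library.Product_Lexorder" "HOL-Library.FuncSet"
begin

text \<open>Order the rows meeting a column by the entries to their right (lexicographically, a missing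
  entry counting as larger than every value). With respect to this order the inversion pairs of a
  row-standard filling lying in the column are exactly the inversions of the word read down the
  column, and the only constraint linking the column to the columns on its right is that each
  letter be smaller than the entry to its right; after sorting, these right neighbours form a
  sequence that depends only on T. Hence deleting columns from the left writes the inversion
  distribution of the fillings with column-sorting T as a convolution, over the columns, of
  inversion distributions of words with prescribed content lying pointwise below a fixed weakly
  increasing bound sequence. Such a distribution is palindromic: deleting the largest letter
  splits it further into a Gaussian binomial coefficient, palindromic by reversal of binary words,
  and a distribution of the same kind. Convolutions of palindromic sequences are palindromic,
  and T has no inversion pair, so the centre of symmetry is the degree of chi^T.\<close>

definition stat_dist :: "'a set \<Rightarrow> ('a \<Rightarrow> nat) \<Rightarrow> nat \<Rightarrow> nat" where
  "stat_dist A s k = card {a\<in>A. s a = k}"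

definition palindromic :: "(nat \<Rightarrow> nat) \<Rightarrow> nat \<Rightarrow> bool" where
  "palindromic g d \<longleftrightarrow> (\<forall>k\<le>d. g k = g (d - k)) \<and> (\<forall>k>d. g k = 0)"

lemma palindromic_sym: "palindromic g d \<Longrightarrow> k \<le> d \<Longrightarrow> g k = g (d - k)"
  unfolding palindromic_def by blast

lemma palindromic_vanishes: "palindromic g d \<Longrightarrow> d < k \<Longrightarrow> g k = 0"
  unfolding palindromic_def by blast

lemma degree_eq_palindromic_center:
  assumes "palindromic (coeff p) d" "coeff p 0 \<noteq> 0"
  shows "degree p = d"
proof (rule antisym)
  show "degree p \<le> d" using palindromic_vanishes[OF assms(1)] by (intro degree_le) auto
  show "d \<le> degree p" using palindromic_sym[OF assms(1), of d] assms(2) by (intro le_degree) simp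
qed

lemma stat_dist_fibration:
  assumes "finite A" "finite B" "\<And>a. a \<in> A \<Longrightarrow> f a \<in> B"
    "\<And>a. a \<in> A \<Longrightarrow> t (f a) \<le> s a"
    "\<And>b i. b \<in> B \<Longrightarrow> card {a\<in>A. f a = b \<and> s a = t b + i} = g i"
  shows "stat_dist A s k = (\<Sum>j\<le>k. stat_dist B t j * g (k - j))"
proof -
  have "{a\<in>A. s a = k} = (\<Union>b\<in>{b\<in>B. t b \<le> k}. {a\<in>A. f a = b \<and> s a = t b + (k - t b)})"
    using assms(3,4) by force
  hence "stat_dist A s k = (\<Sum>b\<in>{b\<in>B. t b \<le> k}. card {a\<in>A. f a = b \<and> s a = t b + (k - t b)})"
    unfolding stat_dist_def using assms(1,2)
    by (simp add: card_UN_disjoint disjoint_iff)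
  also have "\<dots> = (\<Sum>b\<in>{b\<in>B. t b \<le> k}. g (k - t b))"
    using assms(5) by (intro sum.cong) blast+
  also have "\<dots> = (\<Sum>b\<in>B. if t b \<le> k then g (k - t b) else 0)"
    using assms(2) by (simp add: sum.inter_filter)
  also have "\<dots> = (\<Sum>b\<in>B. \<Sum>j\<le>k. if t b = j then g (k - j) else 0)"
    by (rule sum.cong) (auto simp: sum.delta)
  also have "\<dots> = (\<Sum>j\<le>k. \<Sum>b\<in>B. if t b = j then g (k - j) else 0)"
    by (rule sum.swap)
  also have "\<dots> = (\<Sum>j\<le>k. stat_dist B t j * g (k - j))"
    unfolding stat_dist_def using assms(2) by (simp add: sum.If_cases Int_def)
  finally show ?thesis .
qed

lemma palindromic_convolution:
  assumes "palindromic p d" "palindromic g e"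
  shows "palindromic (\<lambda>k. \<Sum>j\<le>k. p j * g (k - j)) (d + e)"
proof -
  let ?J = "\<lambda>k. {j. j \<le> k \<and> j \<le> d \<and> k - j \<le> e}"
  have support: "(\<Sum>j\<le>k. p j * g (k - j)) = (\<Sum>j\<in>?J k. p j * g (k - j))" for k
    using palindromic_vanishes[OF assms(1)] palindromic_vanishes[OF assms(2)]
    by (intro sum.mono_neutral_right) (auto, (metis not_less neq0_conv)+)
  show ?thesis unfolding palindromic_def
  proof safe
    fix k assume k: "k \<le> d + e"
    show "(\<Sum>j\<le>k. p j * g (k - j)) = (\<Sum>j\<le>d + e - k. p j * g (d + e - k - j))"
      unfolding support
    proof (rule sum.reindex_bij_witness[of _ "\<lambda>j. d - j" "\<lambda>j. d - j"])
      fix a assume a: "a \<in> ?J k"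
      then show "d - (d - a) = a" "d - a \<in> ?J (d + e - k)" using k by auto
      have "p (d - a) = p a" using palindromic_sym[OF assms(1), of "d - a"] a by simp
      moreover have "g (d + e - k - (d - a)) = g (k - a)"
        using palindromic_sym[OF assms(2), of "k - a"] a k by (simp add: diff_diff_right)
      ultimately show "p (d - a) * g (d + e - k - (d - a)) = p a * g (k - a)" by simp
    next
      fix b assume "b \<in> ?J (d + e - k)"
      then show "d - (d - b) = b" "d - b \<in> ?J k" using k by auto
    qed
  next
    fix k assume "d + e < k"
    thus "(\<Sum>j\<le>k. p j * g (k - j)) = 0"
      unfolding support by (auto simp: palindromic_vanishes[OF assms(1)] palindromic_vanishes[OF assms(2)])
  qed
qed

fun bool_inv :: "bool list \<Rightarrow> nat" where
  "bool_inv [] = 0"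
| "bool_inv (c # cs) = (if c then length (filter Not cs) else 0) + bool_inv cs"

lemma bool_inv_append:
  "bool_inv (xs @ ys) = bool_inv xs + bool_inv ys + length (filter id xs) * length (filter Not ys)"
  by (induction xs) (auto simp: algebra_simps)

lemma bool_inv_replicate_False_append: "bool_inv (replicate P False @ cs) = bool_inv cs"
  by (induction P) auto

lemma length_filter_Not: "length (filter Not cs) = length cs - length (filter id cs)"
  using sum_length_filter_compl[of id cs] by simp

lemma bool_inv_rev_add: "bool_inv (rev cs) + bool_inv cs = length (filter id cs) * (length cs - length (filter id cs))"
proof -
  have "bool_inv (rev cs) + bool_inv cs = length (filter id cs) * length (filter Not cs)"
    by (induction cs) (auto simp: bool_inv_append algebra_simps rev_filter[symmetric] id_def)
  thus ?thesis by (simp add: length_filter_Not)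
qed

definition bool_words :: "nat \<Rightarrow> nat \<Rightarrow> nat \<Rightarrow> bool list set" where
  "bool_words L m i = {cs. length cs = L \<and> length (filter id cs) = m \<and> bool_inv cs = i}"

definition qbinom :: "nat \<Rightarrow> nat \<Rightarrow> nat \<Rightarrow> nat" where
  "qbinom L m i = card (bool_words L m i)"

lemma rev_in_bool_words:
  "k \<le> m * (L - m) \<Longrightarrow> cs \<in> bool_words L m k \<Longrightarrow> rev cs \<in> bool_words L m (m * (L - m) - k)"
  using bool_inv_rev_add[of cs] by (simp add: bool_words_def rev_filter[symmetric])

lemma qbinom_palindromic: "palindromic (qbinom L m) (m * (L - m))"
  unfolding palindromic_def
proof (intro conjI allI impI)
  fix k assume k: "k \<le> m * (L - m)"
  have "rev ` bool_words L m k = bool_words L m (m * (L - m) - k)"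
  proof
    show "rev ` bool_words L m k \<subseteq> bool_words L m (m * (L - m) - k)"
      using rev_in_bool_words[OF k] by blast
    show "bool_words L m (m * (L - m) - k) \<subseteq> rev ` bool_words L m k"
      using rev_in_bool_words[of "m * (L - m) - k"] k by (force intro: rev_image_eqI)
  qed
  moreover have "card (rev ` bool_words L m k) = card (bool_words L m k)"
    by (rule card_image) (simp add: inj_on_def)
  ultimately show "qbinom L m k = qbinom L m (m * (L - m) - k)" unfolding qbinom_def by simp
next
  fix k assume "m * (L - m) < k"
  hence "bool_words L m k = {}"
    using bool_inv_rev_add by (auto simp: bool_words_def) (metis le_add2 not_le)
  thus "qbinom L m k = 0" unfolding qbinom_def by simp
qed

fun inversions :: "nat list \<Rightarrow> nat" where
  "inversions [] = 0"
| "inversions (a # w) = length (filter (\<lambda>b. b < a) w) + inversions w"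

lemma inversions_split_max:
  assumes "\<forall>y\<in>set w. y \<le> x"
  shows "inversions w = inversions (filter (\<lambda>y. y \<noteq> x) w) + bool_inv (map (\<lambda>y. y = x) w)"
  using assms
proof (induction w)
  case (Cons a w)
  have "filter (\<lambda>b. b < a) w = filter (\<lambda>b. b < a) (filter (\<lambda>y. y \<noteq> x) w)" if "a \<noteq> x"
    using that Cons.prems by (induction w) auto
  moreover have "length (filter (\<lambda>b. b < x) w) = length (filter Not (map (\<lambda>y. y = x) w))"
    using Cons.prems by (induction w) auto
  ultimately show ?case using Cons by auto
qed simp

lemma inversions_map_sorted_key:
  fixes K :: "'a \<Rightarrow> 'k::order" and f :: "'a \<Rightarrow> nat"
  assumes "sorted_wrt (\<lambda>a b. K a < K b) R"
  shows "inversions (map f R) = card {(a, b). a \<in> set R \<and> b \<in> set R \<and> f a < f b \<and> K b < K a}"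
  using assms
proof (induction R)
  case (Cons r R)
  let ?S = "\<lambda>R. {(a, b). a \<in> set R \<and> b \<in> set R \<and> f a < f b \<and> K b < K a}"
  have "distinct xs" if "sorted_wrt (\<lambda>a b. K a < K b) xs" for xs
    using that by (induction xs) auto
  hence "distinct R" using Cons.prems by simp
  hence "length (filter (\<lambda>y. y < f r) (map f R)) = card {a \<in> set R. f a < f r}"
    by (simp add: distinct_length_filter filter_map comp_def Int_def conj_commute)
  moreover have "?S (r # R) = (\<lambda>a. (a, r)) ` {a \<in> set R. f a < f r} \<union> ?S R"
    using Cons.prems by (auto dest: less_asym)
  moreover have "(\<lambda>a. (a, r)) ` {a \<in> set R. f a < f r} \<inter> ?S R = {}"
    using Cons.prems by auto
  moreover have "finite (?S R)"
    by (rule finite_subset[of _ "set R \<times> set R"]) auto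
  ultimately show ?case using Cons by (simp add: card_Un_disjoint card_image inj_on_def)
qed simp

fun interleave :: "nat \<Rightarrow> bool list \<Rightarrow> nat list \<Rightarrow> nat list" where
  "interleave x [] ys = []"
| "interleave x (c # cs) ys = (if c then x # interleave x cs ys else hd ys # interleave x cs (tl ys))"

lemma interleave_props:
  assumes "x \<notin> set ys" "length ys = length (filter Not cs)"
  shows "filter (\<lambda>y. y \<noteq> x) (interleave x cs ys) = ys \<and> map (\<lambda>y. y = x) (interleave x cs ys) = cs
     \<and> length (interleave x cs ys) = length cs
     \<and> mset (interleave x cs ys) = mset ys + replicate_mset (length (filter id cs)) x"
  using assms
proof (induction cs arbitrary: ys)
  case (Cons c cs)
  show ?case
  proof (cases c)
    case False
    then obtain y ys' where "ys = y # ys'" using Cons.prems by (cases ys) auto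
    thus ?thesis using Cons False by auto
  qed (use Cons in auto)
qed simp

lemma interleave_split: "interleave x (map (\<lambda>y. y = x) w) (filter (\<lambda>y. y \<noteq> x) w) = w"
  by (induction w) auto

lemma interleave_replicate_False:
  "P \<le> length ys \<Longrightarrow> interleave x (replicate P False @ cs) ys = take P ys @ interleave x cs (drop P ys)"
proof (induction P arbitrary: ys)
  case (Suc P)
  then obtain y ys' where "ys = y # ys'" by (cases ys) auto
  thus ?case using Suc by auto
qed simp

definition bounded_words :: "nat list \<Rightarrow> nat multiset \<Rightarrow> nat list set" where
  "bounded_words B M = {w. length w = length B \<and> mset w = M \<and> (\<forall>p<length B. w!p < B!p)}"

lemma finite_bounded_words: "finite (bounded_words B M)"
proof (rule finite_subset)
  show "bounded_words B M \<subseteq> {w. set w \<subseteq> set_mset M \<and> length w = length B}"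
    unfolding bounded_words_def by auto
  show "finite {w. set w \<subseteq> set_mset M \<and> length w = length B}"
    by (rule finite_lists_length_eq) simp
qed

lemma bounded_words_empty: "bounded_words B {#} = (if B = [] then {[]} else {})"
  unfolding bounded_words_def by auto

lemma filter_mset_neq_plus_replicate: "filter_mset (\<lambda>y. y \<noteq> x) M + replicate_mset (count M x) x = M"
  by (rule multiset_eqI) auto

text \<open>The largest letter x can only occur at the last length B - P positions, where all bounds
  exceed x. After erasing it, the letters from position P on are only known to be below x, whence
  the bound Suc x in reduced_bounds; the positions of x form a binary word of length length B - P
  whose inversions account for the inversions lost by the erasure.\<close>

locale max_letter_split =
  fixes B :: "nat list" and M :: "nat multiset" and x P :: nat
  assumes letters_le_max: "\<forall>y\<in>#M. y \<le> x"
    and bounds_le_max: "\<forall>p<P. B ! p \<le> x"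
    and bounds_gt_max: "\<forall>p. P \<le> p \<and> p < length B \<longrightarrow> x < B ! p"
    and prefix_le: "P \<le> length B"
begin

definition reduced_bounds :: "nat list" where
  "reduced_bounds = take P B @ replicate (length B - P - count M x) (Suc x)"

definition max_marks :: "nat list \<Rightarrow> bool list" where
  "max_marks w = drop P (map (\<lambda>y. y = x) w)"

definition insert_max :: "nat list \<Rightarrow> bool list \<Rightarrow> nat list" where
  "insert_max w' cs = interleave x (replicate P False @ cs) w'"

lemma bounded_wordsD:
  assumes "w \<in> bounded_words B M"
  shows "length w = length B" "mset w = M" "\<forall>p<length B. w ! p < B ! p" "\<forall>y\<in>set w. y \<le> x"
    and "\<forall>p<P. w ! p \<noteq> x"
proof -
  show w: "length w = length B" "mset w = M" "\<forall>p<length B. w ! p < B ! p"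
    using assms unfolding bounded_words_def by auto
  show "\<forall>y\<in>set w. y \<le> x" using w(2) letters_le_max by auto
  show "\<forall>p<P. w ! p \<noteq> x"
    using w(3) bounds_le_max prefix_le by (metis leD order.strict_trans1 order_less_le_trans)
qed

lemma max_notin_prefix: "w \<in> bounded_words B M \<Longrightarrow> x \<notin> set (take P w)"
  using bounded_wordsD(5) by (auto simp: in_set_conv_nth)

lemma count_max_le: "w \<in> bounded_words B M \<Longrightarrow> count M x \<le> length B - P"
proof -
  assume w: "w \<in> bounded_words B M"
  have "count M x = count (mset (take P w)) x + count (mset (drop P w)) x"
    using bounded_wordsD(2)[OF w] by (metis append_take_drop_id count_union mset_append)
  moreover have "count (mset (take P w)) x = 0" using max_notin_prefix[OF w] by simp
  moreover have "count (mset (drop P w)) x \<le> length B - P"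
    using bounded_wordsD(1)[OF w] count_le_size[of "mset (drop P w)" x] by simp
  ultimately show ?thesis by simp
qed

lemma erase_max_in_bounded_words:
  assumes w: "w \<in> bounded_words B M"
  shows "filter (\<lambda>y. y \<noteq> x) w \<in> bounded_words reduced_bounds (filter_mset (\<lambda>y. y \<noteq> x) M)"
proof -
  note wB = bounded_wordsD[OF w]
  let ?w' = "filter (\<lambda>y. y \<noteq> x) w"
  have "filter (\<lambda>y. y \<noteq> x) (take P w) = take P w"
    using max_notin_prefix[OF w] by (auto simp: filter_id_conv)
  hence prefix: "?w' = take P w @ filter (\<lambda>y. y \<noteq> x) (drop P w)"
    by (metis append_take_drop_id filter_append)
  have "length (filter (\<lambda>y. \<not> y \<noteq> x) w) = count (mset w) x" by (induction w) auto
  hence "length ?w' + count M x = length B"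
    using sum_length_filter_compl[of "\<lambda>y. y \<noteq> x" w] wB(1,2) by simp
  hence len: "length ?w' = length B - count M x" by simp
  have "length reduced_bounds = length B - count M x"
    using count_max_le[OF w] prefix_le unfolding reduced_bounds_def by simp
  moreover have "?w' ! p < reduced_bounds ! p" if p: "p < length B - count M x" for p
  proof (cases "p < P")
    case True
    thus ?thesis using prefix wB(1,3) prefix_le unfolding reduced_bounds_def by (simp add: nth_append)
  next
    case False
    have "reduced_bounds ! p = Suc x"
      using False p prefix_le count_max_le[OF w] unfolding reduced_bounds_def by (simp add: nth_append)
    moreover have "?w' ! p \<in> set w" using p len by (metis filter_is_subset nth_mem subsetD)
    ultimately show ?thesis using wB(4) by fastforce
  qed
  ultimately show ?thesis using len wB(2) unfolding bounded_words_def by auto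
qed

lemma max_marks_in_bool_words:
  assumes "w \<in> bounded_words B M"
  shows "max_marks w \<in> bool_words (length B - P) (count M x) (inversions w - inversions (filter (\<lambda>y. y \<noteq> x) w))"
    and "insert_max (filter (\<lambda>y. y \<noteq> x) w) (max_marks w) = w"
proof -
  note wB = bounded_wordsD[OF assms]
  have "take P (map (\<lambda>y. y = x) w) = replicate P False"
    using wB(1,5) prefix_le by (intro nth_equalityI) auto
  hence marks: "map (\<lambda>y. y = x) w = replicate P False @ max_marks w"
    unfolding max_marks_def by (metis append_take_drop_id)
  show "insert_max (filter (\<lambda>y. y \<noteq> x) w) (max_marks w) = w"
    unfolding insert_max_def using marks interleave_split[of x w] by metis
  have "length (filter id (map (\<lambda>y. y = x) w)) = count (mset w) x"
    by (induction w) auto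
  hence "length (filter id (max_marks w)) = count M x" using marks wB(2) by simp
  moreover have "bool_inv (max_marks w) = inversions w - inversions (filter (\<lambda>y. y \<noteq> x) w)"
    using inversions_split_max[OF wB(4)] marks bool_inv_replicate_False_append by simp
  ultimately show "max_marks w \<in> bool_words (length B - P) (count M x) (inversions w - inversions (filter (\<lambda>y. y \<noteq> x) w))"
    using wB(1) unfolding bool_words_def max_marks_def by simp
qed

lemma insert_max_props:
  assumes mult: "count M x \<le> length B - P"
    and w': "w' \<in> bounded_words reduced_bounds (filter_mset (\<lambda>y. y \<noteq> x) M)"
    and lcs: "length cs = length B - P" and tcs: "length (filter id cs) = count M x"
  shows "filter (\<lambda>y. y \<noteq> x) (insert_max w' cs) = w'"
    and "map (\<lambda>y. y = x) (insert_max w' cs) = replicate P False @ cs"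
    and "length (insert_max w' cs) = length B" and "mset (insert_max w' cs) = M"
    and "insert_max w' cs = take P w' @ interleave x cs (drop P w')"
proof -
  have lw': "length w' = length B - count M x" and mw': "mset w' = filter_mset (\<lambda>y. y \<noteq> x) M"
    using w' mult prefix_le unfolding bounded_words_def reduced_bounds_def by auto
  have "set w' = set_mset (filter_mset (\<lambda>y. y \<noteq> x) M)" by (metis mw' set_mset_mset)
  hence x_notin: "x \<notin> set w'" by simp
  have "length w' = length (filter Not (replicate P False @ cs))"
    using lw' lcs tcs length_filter_Not[of cs] mult prefix_le by simp
  note props = interleave_props[OF x_notin this, folded insert_max_def]
  thus "filter (\<lambda>y. y \<noteq> x) (insert_max w' cs) = w'"
    and "map (\<lambda>y. y = x) (insert_max w' cs) = replicate P False @ cs"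
    and "length (insert_max w' cs) = length B"
    using lcs prefix_le by simp_all
  show "mset (insert_max w' cs) = M"
    using props mw' tcs filter_mset_neq_plus_replicate[of x M] by simp
  show "insert_max w' cs = take P w' @ interleave x cs (drop P w')"
    unfolding insert_max_def by (rule interleave_replicate_False) (use lw' mult prefix_le in simp)
qed

lemma insert_max_in_bounded_words:
  assumes mult: "count M x \<le> length B - P"
    and w': "w' \<in> bounded_words reduced_bounds (filter_mset (\<lambda>y. y \<noteq> x) M)"
    and cs: "cs \<in> bool_words (length B - P) (count M x) i"
  shows "insert_max w' cs \<in> bounded_words B M" and "filter (\<lambda>y. y \<noteq> x) (insert_max w' cs) = w'"
    and "inversions (insert_max w' cs) = inversions w' + i" and "max_marks (insert_max w' cs) = cs"
proof -
  let ?w = "insert_max w' cs"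
  have cs_props: "length cs = length B - P" "length (filter id cs) = count M x" "bool_inv cs = i"
    using cs unfolding bool_words_def by auto
  note props = insert_max_props[OF mult w' cs_props(1,2)]
  show erase: "filter (\<lambda>y. y \<noteq> x) ?w = w'" and "max_marks ?w = cs"
    using props cs_props unfolding max_marks_def by auto
  have below_max: "\<forall>y\<in>set ?w. y \<le> x" using props(4) letters_le_max by (metis set_mset_mset)
  have "?w ! p < B ! p" if p: "p < length B" for p
  proof (cases "p < P")
    case True
    have w'_bounds: "length w' = length B - count M x"
      "\<forall>p<length B - count M x. w' ! p < reduced_bounds ! p"
      using w' mult prefix_le unfolding bounded_words_def reduced_bounds_def by auto
    have "p < length B - count M x" using True mult prefix_le by arith
    hence "w' ! p < reduced_bounds ! p" using w'_bounds(2) by blast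
    moreover have "reduced_bounds ! p = B ! p"
      using True prefix_le unfolding reduced_bounds_def by (simp add: nth_append)
    moreover have "?w ! p = w' ! p"
      using props(5) True w'_bounds(1) mult prefix_le by (simp add: nth_append)
    ultimately show ?thesis by simp
  next
    case False
    have "?w ! p \<le> x" using below_max props(3) p by simp
    moreover have "x < B ! p" using bounds_gt_max p False by simp
    ultimately show ?thesis by simp
  qed
  thus "?w \<in> bounded_words B M" using props cs_props unfolding bounded_words_def by auto
  show "inversions ?w = inversions w' + i"
    using inversions_split_max[OF below_max] erase props(2) cs_props bool_inv_replicate_False_append by simp
qed

lemma erase_max_fiber_card:
  assumes "count M x \<le> length B - P"
    and "w' \<in> bounded_words reduced_bounds (filter_mset (\<lambda>y. y \<noteq> x) M)"
  shows "card {w\<in>bounded_words B M. filter (\<lambda>y. y \<noteq> x) w = w' \<and> inversions w = inversions w' + i}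
      = qbinom (length B - P) (count M x) i"
proof -
  let ?A = "{w\<in>bounded_words B M. filter (\<lambda>y. y \<noteq> x) w = w' \<and> inversions w = inversions w' + i}"
  have "bij_betw max_marks ?A (bool_words (length B - P) (count M x) i)"
  proof (rule bij_betw_byWitness[where f'="insert_max w'"])
    show "\<forall>w\<in>?A. insert_max w' (max_marks w) = w" using max_marks_in_bool_words(2) by blast
    show "max_marks ` ?A \<subseteq> bool_words (length B - P) (count M x) i"
      using max_marks_in_bool_words(1) by fastforce
  qed (use insert_max_in_bounded_words[OF assms] in blast)+
  thus ?thesis unfolding qbinom_def by (rule bij_betw_same_card)
qed

lemma stat_dist_erase_max:
  assumes "count M x \<le> length B - P"
  shows "stat_dist (bounded_words B M) inversions k = (\<Sum>j\<le>k.
     stat_dist (bounded_words reduced_bounds (filter_mset (\<lambda>y. y \<noteq> x) M)) inversions j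
     * qbinom (length B - P) (count M x) (k - j))"
proof (rule stat_dist_fibration[where f="filter (\<lambda>y. y \<noteq> x)"])
  fix w assume w: "w \<in> bounded_words B M"
  show "filter (\<lambda>y. y \<noteq> x) w \<in> bounded_words reduced_bounds (filter_mset (\<lambda>y. y \<noteq> x) M)"
    by (rule erase_max_in_bounded_words[OF w])
  show "inversions (filter (\<lambda>y. y \<noteq> x) w) \<le> inversions w"
    using inversions_split_max[OF bounded_wordsD(4)[OF w]] by simp
next
  fix w' i assume "w' \<in> bounded_words reduced_bounds (filter_mset (\<lambda>y. y \<noteq> x) M)"
  thus "card {w \<in> bounded_words B M. filter (\<lambda>y. y \<noteq> x) w = w' \<and> inversions w = inversions w' + i}
      = qbinom (length B - P) (count M x) i"
    by (rule erase_max_fiber_card[OF assms])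
qed (rule finite_bounded_words)+


lemma sorted_reduced_bounds: "sorted B \<Longrightarrow> sorted reduced_bounds"
  using sorted_wrt_take[of "(\<le>)" B P] bounds_le_max
  unfolding reduced_bounds_def by (auto simp: sorted_append in_set_conv_nth le_Suc_eq)

lemma palindromic_by_erase_max:
  assumes "palindromic (stat_dist (bounded_words reduced_bounds (filter_mset (\<lambda>y. y \<noteq> x) M)) inversions) d"
  shows "\<exists>e. palindromic (stat_dist (bounded_words B M) inversions) e"
proof (cases "count M x \<le> length B - P")
  case True
  have "stat_dist (bounded_words B M) inversions = (\<lambda>k. \<Sum>j\<le>k.
      stat_dist (bounded_words reduced_bounds (filter_mset (\<lambda>y. y \<noteq> x) M)) inversions j
      * qbinom (length B - P) (count M x) (k - j))"
    using stat_dist_erase_max[OF True] by (rule ext)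
  thus ?thesis using palindromic_convolution[OF assms qbinom_palindromic] by auto
next
  case False
  hence "bounded_words B M = {}" using count_max_le by blast
  hence "palindromic (stat_dist (bounded_words B M) inversions) 0"
    unfolding palindromic_def stat_dist_def by simp
  thus ?thesis by blast
qed
end

lemma max_letter_split_Max:
  assumes "sorted B" "M \<noteq> {#}"
  shows "max_letter_split B M (Max (set_mset M)) (length (takeWhile (\<lambda>b. b \<le> Max (set_mset M)) B))"
    (is "max_letter_split B M ?x ?P")
proof
  show "\<forall>y\<in>#M. y \<le> ?x" by simp
  show "?P \<le> length B" by (rule length_takeWhile_le)
  show "\<forall>p<?P. B ! p \<le> ?x" by (metis nth_mem set_takeWhileD takeWhile_nth)
  show "\<forall>p. ?P \<le> p \<and> p < length B \<longrightarrow> ?x < B ! p"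
  proof (intro allI impI)
    fix p assume p: "?P \<le> p \<and> p < length B"
    hence "\<not> B ! ?P \<le> ?x" by (intro nth_length_takeWhile) simp
    moreover have "B ! ?P \<le> B ! p" using assms(1) p by (simp add: sorted_nth_mono)
    ultimately show "?x < B ! p" by simp
  qed
qed

theorem bounded_words_palindromic:
  "sorted B \<Longrightarrow> \<exists>d. palindromic (stat_dist (bounded_words B M) inversions) d"
proof (induction "size M" arbitrary: B M rule: less_induct)
  case less
  show ?case
  proof (cases "M = {#}")
    case True
    hence "palindromic (stat_dist (bounded_words B M) inversions) 0"
      unfolding palindromic_def stat_dist_def by (auto simp: bounded_words_empty)
    thus ?thesis by blast
  next
    case False
    define x where "x = Max (set_mset M)"
    define P where "P = length (takeWhile (\<lambda>b. b \<le> x) B)"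
    interpret max_letter_split B M x P
      unfolding x_def P_def using less.prems False by (rule max_letter_split_Max)
    have "0 < count M x" unfolding x_def using False by simp
    hence "size (filter_mset (\<lambda>y. y \<noteq> x) M) < size M"
      using size_union[of "filter_mset (\<lambda>y. y \<noteq> x) M" "replicate_mset (count M x) x"]
      by (simp add: filter_mset_neq_plus_replicate)
    then obtain d where
      "palindromic (stat_dist (bounded_words reduced_bounds (filter_mset (\<lambda>y. y \<noteq> x) M)) inversions) d"
      using less.hyps sorted_reduced_bounds[OF less.prems] by blast
    thus ?thesis by (rule palindromic_by_erase_max)
  qed
qed

lemma list_less_iff_first_diff:
  fixes xs ys :: "'a::linorder list"
  shows "length xs = length ys \<Longrightarrow> i < length xs \<Longrightarrow> \<forall>r<i. xs!r = ys!r \<Longrightarrow> xs!i \<noteq> ys!i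
    \<Longrightarrow> (xs < ys \<longleftrightarrow> xs!i < ys!i)"
proof (induction xs arbitrary: ys i)
  case (Cons x xs)
  then obtain y ys' where ys: "ys = y # ys'" by (cases ys) auto
  show ?case
  proof (cases i)
    case (Suc i')
    have "x = y" using Cons.prems(3) ys Suc by (metis nth_Cons_0 zero_less_Suc)
    moreover have "xs < ys' \<longleftrightarrow> xs!i' < ys'!i'"
      using Cons.IH[of ys' i'] Cons.prems ys Suc by force
    ultimately show ?thesis using ys Suc by simp
  qed (use Cons.prems ys in auto)
qed simp

text \<open>The inversion-pair condition compares two rows at their first difference, a missing entry
  deciding in favour of the lower row. Padding both rows with an entry larger than all values and
  appending the row index turns it into a comparison in the lexicographic order.\<close>

lemma first_difference_iff_padded_less:
  fixes A B :: "nat \<Rightarrow> nat" and la lb W big a b :: nat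
  assumes "la < W" "lb < W" "\<forall>r<la. A r < big" "\<forall>r<lb. B r < big" "a \<noteq> b"
    "la < lb \<Longrightarrow> b < a" "lb < la \<Longrightarrow> a < b"
  shows "(let r0 = (LEAST r. \<not> r < la \<or> \<not> r < lb \<or> A r \<noteq> B r) in
           ((\<not> r0 < la \<or> \<not> r0 < lb) \<and> b < a) \<or> (r0 < la \<and> r0 < lb \<and> B r0 < A r0))
     \<longleftrightarrow> (map (\<lambda>r. if r < lb then B r else big) [0..<W], b) < (map (\<lambda>r. if r < la then A r else big) [0..<W], a)"
proof -
  define D where "D r \<longleftrightarrow> \<not> r < la \<or> \<not> r < lb \<or> A r \<noteq> B r" for r
  define r0 where "r0 = (LEAST r. D r)"
  define ka where "ka = map (\<lambda>r. if r < la then A r else big) [0..<W]"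
  define kb where "kb = map (\<lambda>r. if r < lb then B r else big) [0..<W]"
  have "D la" "D lb" unfolding D_def by simp_all
  hence r0: "r0 \<le> la" "r0 \<le> lb" "D r0" unfolding r0_def by (auto intro: Least_le LeastI)
  have agree: "ka ! r = kb ! r" if "r < r0" for r
    using not_less_Least[of r D, folded r0_def] that r0 assms(1) unfolding D_def ka_def kb_def by auto
  have len: "length ka = W" "length kb = W" "r0 < W" using r0 assms(1) unfolding ka_def kb_def by auto
  let ?formula = "((\<not> r0 < la \<or> \<not> r0 < lb) \<and> b < a) \<or> (r0 < la \<and> r0 < lb \<and> B r0 < A r0)"
  have "?formula \<longleftrightarrow> (kb, b) < (ka, a)"
  proof (cases "la = lb \<and> r0 = la")
    case True
    hence "ka = kb" using agree len unfolding ka_def kb_def by (intro nth_equalityI) auto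
    thus ?thesis using True by (auto simp: less_prod_def')
  next
    case False
    have "kb ! r0 \<noteq> ka ! r0 \<and> (?formula \<longleftrightarrow> kb ! r0 < ka ! r0)"
      using False r0 len(3) assms unfolding D_def ka_def kb_def by (auto simp: not_less)
    moreover from this have "kb < ka \<longleftrightarrow> kb ! r0 < ka ! r0"
      using agree len by (intro list_less_iff_first_diff) auto
    ultimately show ?thesis by (auto simp: less_prod_def')
  qed
  thus ?thesis unfolding r0_def D_def ka_def kb_def Let_def by simp
qed

lemma list_le_hd:
  fixes xs ys :: "'a::linorder list"
  shows "xs \<le> ys \<Longrightarrow> xs \<noteq> [] \<Longrightarrow> ys \<noteq> [] \<Longrightarrow> xs ! 0 \<le> ys ! 0"
  by (cases xs; cases ys) auto

lemma list_le_pointwise: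
  fixes xs ys :: "'a::linorder list"
  shows "length xs = length ys \<Longrightarrow> \<forall>r<length xs. xs ! r \<le> ys ! r \<Longrightarrow> xs \<le> ys"
proof (induction xs arbitrary: ys)
  case Nil thus ?case by simp
next
  case (Cons x xs)
  then obtain y ys' where ys: "ys = y # ys'" by (cases ys) auto
  have "x \<le> y" using Cons.prems ys by force
  moreover have "xs \<le> ys'" using Cons.IH[of ys'] Cons.prems ys by force
  ultimately show ?case using ys by (auto simp: order.order_iff_strict)
qed

lemma finite_bounded_funs:
  assumes "finite S"
  shows "finite {\<tau>::'a \<Rightarrow> nat. (\<forall>c. c \<notin> S \<longrightarrow> \<tau> c = 0) \<and> (\<forall>c. \<tau> c < K)}"
proof (rule finite_subset)
  show "{\<tau>::'a \<Rightarrow> nat. (\<forall>c. c \<notin> S \<longrightarrow> \<tau> c = 0) \<and> (\<forall>c. \<tau> c < K)}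
     \<subseteq> (\<lambda>g c. if c \<in> S then g c else 0) ` (S \<rightarrow>\<^sub>E {..<K})"
  proof
    fix \<tau> :: "'a \<Rightarrow> nat" assume t: "\<tau> \<in> {\<tau>. (\<forall>c. c \<notin> S \<longrightarrow> \<tau> c = 0) \<and> (\<forall>c. \<tau> c < K)}"
    have "\<tau> = (\<lambda>c. if c \<in> S then restrict \<tau> S c else 0)" using t by (auto simp: fun_eq_iff)
    moreover have "restrict \<tau> S \<in> S \<rightarrow>\<^sub>E {..<K}" using t by auto
    ultimately show "\<tau> \<in> (\<lambda>g c. if c \<in> S then g c else 0) ` (S \<rightarrow>\<^sub>E {..<K})" by blast
  qed
  show "finite ((\<lambda>g c. if c \<in> S then g c else 0) ` (S \<rightarrow>\<^sub>E {..<K}))"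
    using assms by (intro finite_imageI finite_PiE) auto
qed

locale tableau =
  fixes lam mu :: "nat list" and T :: "nat \<times> nat \<Rightarrow> nat"
  assumes shape: "is_shape lam" and T_SSYT: "T \<in> SSYT lam mu"
begin

abbreviation height :: "nat \<Rightarrow> nat" where "height \<equiv> col_height lam"

definition size_shape :: nat where "size_shape = sum_list lam"

definition sentinel :: nat where "sentinel = Suc (length mu)"

definition column :: "(nat \<times> nat \<Rightarrow> nat) \<Rightarrow> nat \<Rightarrow> nat list" where
  "column \<tau> j = map (\<lambda>i. \<tau> (i, j)) [0..<height j]"

lemma shape_antimono: "i \<le> i' \<Longrightarrow> i' < length lam \<Longrightarrow> lam ! i' \<le> lam ! i"
proof (cases "i = i'")
  case False
  assume "i \<le> i'" "i' < length lam"
  hence "i < i'" using False by simp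
  moreover have "sorted_wrt (\<ge>) lam" using shape unfolding is_shape_def by simp
  ultimately show ?thesis using sorted_wrt_nth_less \<open>i' < length lam\<close> by fastforce
qed simp

lemma box_iff_height: "box lam (i, j) \<longleftrightarrow> i < height j"
proof
  assume b: "box lam (i, j)"
  hence il: "i < length lam" and jl: "j < lam ! i" unfolding box_def by auto
  have "\<forall>x\<in>set (take (Suc i) lam). j < x"
  proof
    fix x assume "x \<in> set (take (Suc i) lam)"
    then obtain k where k: "k < length (take (Suc i) lam)" "x = take (Suc i) lam ! k"
      by (metis in_set_conv_nth)
    hence "k \<le> i" "x = lam ! k" by auto
    thus "j < x" using shape_antimono[OF \<open>k \<le> i\<close> il] jl by simp
  qed
  hence "filter (\<lambda>l. j < l) (take (Suc i) lam) = take (Suc i) lam" by (simp add: filter_id_conv)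
  hence "length (filter (\<lambda>l. j < l) (take (Suc i) lam)) = Suc i" using il by simp
  moreover have "filter (\<lambda>l. j < l) lam = filter (\<lambda>l. j < l) (take (Suc i) lam) @ filter (\<lambda>l. j < l) (drop (Suc i) lam)"
    by (metis append_take_drop_id filter_append)
  ultimately show "i < height j" unfolding col_height_def by simp
next
  assume h: "i < height j"
  have il: "i < length lam" using h length_filter_le[of "\<lambda>l. j < l" lam]
    unfolding col_height_def by linarith
  show "box lam (i, j)"
  proof (rule ccontr)
    assume "\<not> box lam (i, j)"
    hence "lam ! i \<le> j" using il unfolding box_def by auto
    have "\<forall>x\<in>set (drop i lam). \<not> j < x"
    proof
      fix x assume "x \<in> set (drop i lam)"
      then obtain k where k: "k < length (drop i lam)" "x = drop i lam ! k"
        by (metis in_set_conv_nth)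
      hence "x = lam ! (i + k)" "i + k < length lam" using il by auto
      thus "\<not> j < x" using shape_antimono[of i "i+k"] \<open>lam ! i \<le> j\<close> by auto
    qed
    hence "filter (\<lambda>l. j < l) (drop i lam) = []" by (simp add: filter_empty_conv)
    moreover have "filter (\<lambda>l. j < l) lam = filter (\<lambda>l. j < l) (take i lam) @ filter (\<lambda>l. j < l) (drop i lam)"
      by (metis append_take_drop_id filter_append)
    ultimately have "height j \<le> i" unfolding col_height_def
      using length_filter_le[of "\<lambda>l. j < l" "take i lam"] by simp
    thus False using h by simp
  qed
qed

lemma height_le_length: "height j \<le> length lam"
  unfolding col_height_def by simp

lemma height_Suc_le: "height (Suc j) \<le> height j"
proof (rule ccontr)
  assume "\<not> height (Suc j) \<le> height j"
  hence "box lam (height j, Suc j)" using box_iff_height by simp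
  hence "box lam (height j, j)" unfolding box_def by simp
  thus False using box_iff_height by simp
qed

lemma box_col_less: "box lam (i, j) \<Longrightarrow> j < size_shape"
  unfolding box_def size_shape_def using elem_le_sum_list[of i lam] by simp

lemma row_length_less_imp: "a < length lam \<Longrightarrow> b < length lam \<Longrightarrow> lam ! a < lam ! b \<Longrightarrow> b < a"
proof (rule ccontr)
  assume "a < length lam" "b < length lam" "lam ! a < lam ! b" "\<not> b < a"
  thus False using shape_antimono[of a b] by simp
qed

lemma finite_boxes: "finite {c. box lam c}"
proof (rule finite_subset[of _ "{..<length lam} \<times> {..<size_shape}"])
  show "{c. box lam c} \<subseteq> {..<length lam} \<times> {..<size_shape}"
  proof
    fix c assume "c \<in> {c. box lam c}"
    hence "box lam (fst c, snd c)" by simp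
    thus "c \<in> {..<length lam} \<times> {..<size_shape}" using box_col_less unfolding box_def by (cases c) auto
  qed
qed simp

lemma T_filling: "T \<in> fillings lam mu" and T_row_standard: "row_standard lam T" and T_col_weak: "col_weak lam T"
  using T_SSYT unfolding SSYT_def by auto

lemma T_less_sentinel: "T c < sentinel"
proof -
  have A: "\<forall>c. box lam c \<longrightarrow> T c \<in> {1..length mu}" and B: "\<forall>c. \<not> box lam c \<longrightarrow> T c = 0"
    using T_filling unfolding fillings_def by blast+
  show ?thesis
  proof (cases "box lam c")
    case True
    hence "T c \<in> {1..length mu}" using A by blast
    thus ?thesis unfolding sentinel_def by simp
  next
    case False
    hence "T c = 0" using B by blast
    thus ?thesis unfolding sentinel_def by simp
  qed
qed

lemma sorted_column_T: "sorted (column T j)"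
proof -
  have "T (i, j) \<le> T (Suc i, j)" if "Suc i < height j" for i
    using T_col_weak that box_iff_height unfolding col_weak_def by blast
  thus ?thesis unfolding column_def sorted_iff_nth_Suc by simp
qed

definition col_fillings :: "nat \<Rightarrow> (nat \<times> nat \<Rightarrow> nat) set" where
  "col_fillings j0 = {\<tau>. (\<forall>i j. (\<not> box lam (i, j) \<or> j < j0) \<longrightarrow> \<tau> (i, j) = 0)
     \<and> (\<forall>i j. j0 \<le> j \<longrightarrow> box lam (i, Suc j) \<longrightarrow> \<tau> (i, j) < \<tau> (i, Suc j))
     \<and> (\<forall>j\<ge>j0. mset (column \<tau> j) = mset (column T j))}"

definition inv_from :: "nat \<Rightarrow> (nat \<times> nat \<Rightarrow> nat) \<Rightarrow> nat" where
  "inv_from j0 \<tau> = card {(c, c'). inv_pair lam \<tau> c c' \<and> j0 \<le> snd c}"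

definition col_inv :: "nat \<Rightarrow> (nat \<times> nat \<Rightarrow> nat) \<Rightarrow> nat" where
  "col_inv j0 \<tau> = card {(c, c'). inv_pair lam \<tau> c c' \<and> snd c = j0}"

definition erase_col :: "nat \<Rightarrow> (nat \<times> nat \<Rightarrow> nat) \<Rightarrow> (nat \<times> nat \<Rightarrow> nat)" where
  "erase_col j0 \<tau> = (\<lambda>(i, j). if j = j0 then 0 else \<tau> (i, j))"

definition row_key :: "(nat \<times> nat \<Rightarrow> nat) \<Rightarrow> nat \<Rightarrow> nat \<Rightarrow> nat list" where
  "row_key \<tau> j0 a = map (\<lambda>r. if r < lam ! a - Suc j0 then \<tau> (a, Suc j0 + r) else sentinel) [0..<size_shape]"

lemma col_fillingsD:
  assumes "\<tau> \<in> col_fillings j0"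
  shows "\<And>i j. \<not> box lam (i, j) \<or> j < j0 \<Longrightarrow> \<tau> (i, j) = 0"
    and "\<And>i j. j0 \<le> j \<Longrightarrow> box lam (i, Suc j) \<Longrightarrow> \<tau> (i, j) < \<tau> (i, Suc j)"
    and "\<And>j. j0 \<le> j \<Longrightarrow> mset (column \<tau> j) = mset (column T j)"
  using assms unfolding col_fillings_def by blast+

lemma inv_pair_box: "inv_pair lam \<tau> c c' \<Longrightarrow> box lam c \<and> box lam c' \<and> snd c = snd c'"
  unfolding inv_pair_def by simp

lemma finite_inv_pairs: "finite {(c, c'). inv_pair lam \<tau> c c' \<and> P c c'}"
proof (rule finite_subset)
  show "{(c, c'). inv_pair lam \<tau> c c' \<and> P c c'} \<subseteq> {c. box lam c} \<times> {c. box lam c}"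
    using inv_pair_box by auto
  show "finite ({c. box lam c} \<times> {c. box lam c})" using finite_boxes by simp
qed

lemma inv_pair_cong:
  assumes "\<forall>i j. snd c \<le> j \<longrightarrow> \<tau> (i, j) = \<tau>2 (i, j)"
  shows "inv_pair lam \<tau> c c' = inv_pair lam \<tau>2 c c'"
proof (cases "snd c = snd c'")
  case True
  have e: "\<tau> (right r c) = \<tau>2 (right r c)" "\<tau> (right r c') = \<tau>2 (right r c')" for r
    unfolding right_def using assms[rule_format, where i="fst c" and j="snd c + r"] assms[rule_format, where i="fst c'" and j="snd c + r"] True
    by simp_all
  have e0: "\<tau> c = \<tau>2 c" "\<tau> c' = \<tau>2 c'"
    using e[of 0] unfolding right_def by simp_all
  have d: "differs lam \<tau> c c' = differs lam \<tau>2 c c'"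
    unfolding differs_def using e by (simp add: fun_eq_iff)
  show ?thesis unfolding inv_pair_def d e e0 ..
next
  case False thus ?thesis unfolding inv_pair_def by simp
qed

lemma inv_from_split: "inv_from j0 \<tau> = inv_from (Suc j0) (erase_col j0 \<tau>) + col_inv j0 \<tau>"
proof -
  have eq: "inv_pair lam (erase_col j0 \<tau>) c c' = inv_pair lam \<tau> c c'" if "Suc j0 \<le> snd c" for c c'
    by (rule inv_pair_cong) (use that in \<open>auto simp: erase_col_def\<close>)
  have "{(c, c'). inv_pair lam \<tau> c c' \<and> j0 \<le> snd c} =
     {(c, c'). inv_pair lam (erase_col j0 \<tau>) c c' \<and> Suc j0 \<le> snd c} \<union> {(c, c'). inv_pair lam \<tau> c c' \<and> snd c = j0}"
    using eq by auto
  moreover have "{(c, c'). inv_pair lam (erase_col j0 \<tau>) c c' \<and> Suc j0 \<le> snd c} \<inter> {(c, c'). inv_pair lam \<tau> c c' \<and> snd c = j0} = {}"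
    by auto
  ultimately show ?thesis unfolding inv_from_def col_inv_def
    by (simp add: card_Un_disjoint finite_inv_pairs)
qed

lemma col_fillings_less_sentinel:
  assumes t: "\<tau> \<in> col_fillings j0"
  shows "\<tau> c < sentinel"
proof (cases c)
  case (Pair i j)
  show ?thesis
  proof (cases "box lam (i, j) \<and> j0 \<le> j")
    case True
    hence "\<tau> (i, j) \<in> set (column \<tau> j)" using box_iff_height unfolding column_def by simp
    also have "set (column \<tau> j) = set (column T j)"
      using arg_cong[OF col_fillingsD(3)[OF t, of j], of set_mset] True by simp
    finally obtain i' where "\<tau> (i, j) = T (i', j)" unfolding column_def by auto
    thus ?thesis using T_less_sentinel Pair by simp
  qed (use col_fillingsD(1)[OF t] Pair sentinel_def in auto)
qed

lemma finite_col_fillings: "finite (col_fillings j0)"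
proof (rule finite_subset)
  show "col_fillings j0 \<subseteq> {\<tau>. (\<forall>c. c \<notin> {c. box lam c} \<longrightarrow> \<tau> c = 0) \<and> (\<forall>c. \<tau> c < sentinel)}"
  proof
    fix \<tau> assume t: "\<tau> \<in> col_fillings j0"
    have "\<tau> c = 0" if "\<not> box lam c" for c
      using t that unfolding col_fillings_def by (cases c) auto
    thus "\<tau> \<in> {\<tau>. (\<forall>c. c \<notin> {c. box lam c} \<longrightarrow> \<tau> c = 0) \<and> (\<forall>c. \<tau> c < sentinel)}"
      using col_fillings_less_sentinel[OF t] by auto
  qed
  show "finite {\<tau>. (\<forall>c. c \<notin> {c. box lam c} \<longrightarrow> \<tau> c = 0) \<and> (\<forall>c. \<tau> c < sentinel)}"
    by (rule finite_bounded_funs) (rule finite_boxes)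
qed

lemma col_fillings_beyond: "col_fillings size_shape = {\<lambda>_. 0}"
proof
  show "col_fillings size_shape \<subseteq> {\<lambda>_. 0}"
  proof
    fix \<tau> assume t: "\<tau> \<in> col_fillings size_shape"
    have "\<tau> (i, j) = 0" for i j
    proof (cases "box lam (i, j)")
      case True thus ?thesis using t box_col_less unfolding col_fillings_def by auto
    next
      case False thus ?thesis using t unfolding col_fillings_def by auto
    qed
    thus "\<tau> \<in> {\<lambda>_. 0}" by (auto simp: fun_eq_iff)
  qed
  have h0: "height j = 0" if "size_shape \<le> j" for j
  proof (rule ccontr)
    assume "height j \<noteq> 0"
    hence "box lam (0, j)" using box_iff_height by simp
    thus False using box_col_less that by fastforce
  qed
  have "(\<lambda>_. 0) \<in> col_fillings size_shape"
    unfolding col_fillings_def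
  proof (intro CollectI conjI allI impI)
    fix i j assume "size_shape \<le> j" "box lam (i, Suc j)"
    thus "(0::nat) < 0" using box_col_less by fastforce
  next
    fix j assume "size_shape \<le> j"
    thus "mset (column (\<lambda>_. 0) j) = mset (column T j)" unfolding column_def using h0 by simp
  qed simp
  thus "{\<lambda>_. 0} \<subseteq> col_fillings size_shape" by simp
qed

lemma inv_from_beyond: "inv_from size_shape \<tau> = 0"
proof -
  have e: "{(c, c'). inv_pair lam \<tau> c c' \<and> size_shape \<le> snd c} = {}"
  proof (rule equals0I)
    fix p assume "p \<in> {(c, c'). inv_pair lam \<tau> c c' \<and> size_shape \<le> snd c}"
    then obtain i j c' where "inv_pair lam \<tau> (i, j) c'" "size_shape \<le> j" by auto
    hence "box lam (i, j)" "size_shape \<le> j" using inv_pair_box by auto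
    thus False using box_col_less by fastforce
  qed
  show ?thesis unfolding inv_from_def e by simp
qed

lemma erase_col_in_col_fillings: "\<tau> \<in> col_fillings j0 \<Longrightarrow> erase_col j0 \<tau> \<in> col_fillings (Suc j0)"
proof -
  assume t: "\<tau> \<in> col_fillings j0"
  have Fz: "\<forall>i j. (\<not> box lam (i, j) \<or> j < j0) \<longrightarrow> \<tau> (i, j) = 0"
    and Fr: "\<forall>i j. j0 \<le> j \<longrightarrow> box lam (i, Suc j) \<longrightarrow> \<tau> (i, j) < \<tau> (i, Suc j)"
    and Fm: "\<forall>j\<ge>j0. mset (column \<tau> j) = mset (column T j)" using t unfolding col_fillings_def by blast+
  have cc: "column (erase_col j0 \<tau>) j = column \<tau> j" if "j \<noteq> j0" for j
    unfolding column_def erase_col_def using that by simp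
  show ?thesis unfolding col_fillings_def
  proof (intro CollectI conjI allI impI)
    fix i j assume "\<not> box lam (i, j) \<or> j < Suc j0"
    thus "erase_col j0 \<tau> (i, j) = 0" using Fz unfolding erase_col_def by (cases "j = j0") auto
  next
    fix i j assume "Suc j0 \<le> j" "box lam (i, Suc j)"
    thus "erase_col j0 \<tau> (i, j) < erase_col j0 \<tau> (i, Suc j)" using Fr unfolding erase_col_def by auto
  next
    fix j assume "Suc j0 \<le> j"
    thus "mset (column (erase_col j0 \<tau>) j) = mset (column T j)" using Fm cc by simp
  qed
qed

lemma inv_pair_iff_row_key:
  assumes vb: "\<forall>c. \<tau> c < sentinel" and a: "a < height j0" and b: "b < height j0" and ab: "a \<noteq> b"
  shows "inv_pair lam \<tau> (a, j0) (b, j0) \<longleftrightarrow> \<tau> (a, j0) < \<tau> (b, j0) \<and> (row_key \<tau> j0 b, b) < (row_key \<tau> j0 a, a)"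
proof -
  have ba: "box lam (a, j0)" and bb: "box lam (b, j0)" using a b box_iff_height by auto
  hence al: "a < length lam" "j0 < lam ! a" and bl: "b < length lam" "j0 < lam ! b"
    unfolding box_def by auto
  define la where "la = lam ! a - Suc j0"
  define lb where "lb = lam ! b - Suc j0"
  define A where "A r = \<tau> (a, Suc j0 + r)" for r
  define B where "B r = \<tau> (b, Suc j0 + r)" for r
  define D where "D r \<longleftrightarrow> \<not> r < la \<or> \<not> r < lb \<or> A r \<noteq> B r" for r
  have bxa: "box lam (a, j0 + Suc r) \<longleftrightarrow> r < la" for r unfolding box_def la_def using al by auto
  have bxb: "box lam (b, j0 + Suc r) \<longleftrightarrow> r < lb" for r unfolding box_def lb_def using bl by auto
  have dS: "differs lam \<tau> (a, j0) (b, j0) (Suc k) \<longleftrightarrow> D k" for k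
    unfolding differs_def right_def D_def A_def B_def using bxa bxb by simp
  have LS: "(LEAST r. 1 \<le> r \<and> differs lam \<tau> (a, j0) (b, j0) r) = Suc (LEAST r. D r)"
  proof (rule Least_Suc2)
    show "1 \<le> Suc la \<and> differs lam \<tau> (a, j0) (b, j0) (Suc la)" using dS D_def by simp
    show "D la" unfolding D_def by simp
    show "\<not> (1 \<le> (0::nat) \<and> differs lam \<tau> (a, j0) (b, j0) 0)" by simp
    show "\<forall>k. (1 \<le> Suc k \<and> differs lam \<tau> (a, j0) (b, j0) (Suc k)) = D k" using dS by simp
  qed
  define r0 where "r0 = (LEAST r. D r)"
  have rc: "right (Suc r0) (a, j0) = (a, j0 + Suc r0)" "right (Suc r0) (b, j0) = (b, j0 + Suc r0)"
    unfolding right_def by simp_all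
  have tA: "\<tau> (a, j0 + Suc r0) = A r0" and tB: "\<tau> (b, j0 + Suc r0) = B r0"
    unfolding A_def B_def by simp_all
  have ip: "inv_pair lam \<tau> (a, j0) (b, j0) \<longleftrightarrow> \<tau> (a, j0) < \<tau> (b, j0) \<and>
     (((\<not> r0 < la \<or> \<not> r0 < lb) \<and> b < a) \<or> (r0 < la \<and> r0 < lb \<and> B r0 < A r0))"
    unfolding inv_pair_def Let_def LS r0_def[symmetric] rc tA tB bxa bxb using ba bb ab by auto
  have lk: "(let r0 = (LEAST r. \<not> r < la \<or> \<not> r < lb \<or> A r \<noteq> B r) in
           ((\<not> r0 < la \<or> \<not> r0 < lb) \<and> b < a) \<or> (r0 < la \<and> r0 < lb \<and> B r0 < A r0))
     \<longleftrightarrow> (map (\<lambda>r. if r < lb then B r else sentinel) [0..<size_shape], b) < (map (\<lambda>r. if r < la then A r else sentinel) [0..<size_shape], a)"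
  proof (rule first_difference_iff_padded_less)
    show "la < size_shape" unfolding la_def size_shape_def using al elem_le_sum_list[of a lam] by simp
    show "lb < size_shape" unfolding lb_def size_shape_def using bl elem_le_sum_list[of b lam] by simp
    show "\<forall>r<la. A r < sentinel" "\<forall>r<lb. B r < sentinel" unfolding A_def B_def using vb by auto
    show "a \<noteq> b" by (rule ab)
    show "b < a" if "la < lb" using row_length_less_imp[OF al(1) bl(1)] that al bl unfolding la_def lb_def by simp
    show "a < b" if "lb < la" using row_length_less_imp[OF bl(1) al(1)] that al bl unfolding la_def lb_def by simp
  qed
  have ka: "row_key \<tau> j0 a = map (\<lambda>r. if r < la then A r else sentinel) [0..<size_shape]"
    unfolding row_key_def la_def A_def ..
  have kb: "row_key \<tau> j0 b = map (\<lambda>r. if r < lb then B r else sentinel) [0..<size_shape]"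
    unfolding row_key_def lb_def B_def ..
  show ?thesis using ip lk unfolding ka kb Let_def D_def[symmetric] r0_def[symmetric] by simp
qed

lemma row_key_cong: "(\<forall>i j. Suc j0 \<le> j \<longrightarrow> \<tau> (i, j) = \<tau>' (i, j)) \<Longrightarrow> row_key \<tau> j0 a = row_key \<tau>' j0 a"
  unfolding row_key_def by (intro map_cong refl) auto

definition rank_key :: "(nat \<times> nat \<Rightarrow> nat) \<Rightarrow> nat \<Rightarrow> nat \<Rightarrow> nat list \<times> nat" where
  "rank_key \<tau>' j0 a = (row_key \<tau>' j0 a, a)"

definition row_order :: "(nat \<times> nat \<Rightarrow> nat) \<Rightarrow> nat \<Rightarrow> nat list" where
  "row_order \<tau>' j0 = sort_key (rank_key \<tau>' j0) [0..<height j0]"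

definition right_entry :: "(nat \<times> nat \<Rightarrow> nat) \<Rightarrow> nat \<Rightarrow> nat \<Rightarrow> nat" where
  "right_entry \<tau>' j0 a = (if a < height (Suc j0) then \<tau>' (a, Suc j0) else sentinel)"

definition row_pos :: "(nat \<times> nat \<Rightarrow> nat) \<Rightarrow> nat \<Rightarrow> nat \<Rightarrow> nat" where
  "row_pos \<tau>' j0 a = (THE p. p < height j0 \<and> row_order \<tau>' j0 ! p = a)"

definition col_bounds :: "nat \<Rightarrow> nat list" where
  "col_bounds j0 = sort (column T (Suc j0) @ replicate (height j0 - height (Suc j0)) sentinel)"

lemma length_row_order: "length (row_order \<tau>' j0) = height j0"
  unfolding row_order_def by simp

lemma distinct_row_order: "distinct (row_order \<tau>' j0)"
  unfolding row_order_def by simp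

lemma set_row_order: "set (row_order \<tau>' j0) = {..<height j0}"
  unfolding row_order_def by auto

lemma row_order_less: "p < height j0 \<Longrightarrow> row_order \<tau>' j0 ! p < height j0"
  using set_row_order length_row_order by (metis lessThan_iff nth_mem)

lemma row_order_strict_mono:
  assumes "p < q" "q < height j0"
  shows "rank_key \<tau>' j0 (row_order \<tau>' j0 ! p) < rank_key \<tau>' j0 (row_order \<tau>' j0 ! q)"
proof -
  have s: "sorted (map (rank_key \<tau>' j0) (row_order \<tau>' j0))" unfolding row_order_def by simp
  have "rank_key \<tau>' j0 (row_order \<tau>' j0 ! p) \<le> rank_key \<tau>' j0 (row_order \<tau>' j0 ! q)"
    using sorted_nth_mono[OF s, of p q] assms length_row_order by simp
  moreover have "row_order \<tau>' j0 ! p \<noteq> row_order \<tau>' j0 ! q"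
    using distinct_row_order assms length_row_order by (simp add: nth_eq_iff_index_eq)
  ultimately show ?thesis unfolding rank_key_def by (auto simp: less_prod_def')
qed

lemma sorted_wrt_row_order: "sorted_wrt (\<lambda>a b. rank_key \<tau>' j0 a < rank_key \<tau>' j0 b) (row_order \<tau>' j0)"
  unfolding sorted_wrt_iff_nth_less using row_order_strict_mono length_row_order by simp

lemma row_order_row_pos:
  assumes "a < height j0"
  shows "row_pos \<tau>' j0 a < height j0 \<and> row_order \<tau>' j0 ! (row_pos \<tau>' j0 a) = a"
proof -
  have "\<exists>!p. p < length (row_order \<tau>' j0) \<and> row_order \<tau>' j0 ! p = a"
    by (rule distinct_Ex1) (use distinct_row_order set_row_order assms in auto)
  hence "\<exists>!p. p < height j0 \<and> row_order \<tau>' j0 ! p = a" using length_row_order by simp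
  thus ?thesis unfolding row_pos_def by (rule theI')
qed

lemma row_pos_row_order:
  assumes "p < height j0"
  shows "row_pos \<tau>' j0 (row_order \<tau>' j0 ! p) = p"
proof -
  have a: "row_order \<tau>' j0 ! p < height j0" using row_order_less[OF assms] .
  note pp = row_order_row_pos[OF a, of \<tau>']
  show ?thesis using pp assms distinct_row_order length_row_order by (metis nth_eq_iff_index_eq)
qed

lemma row_key_hd:
  assumes "a < height j0"
  shows "row_key \<tau>' j0 a ! 0 = right_entry \<tau>' j0 a"
proof -
  have b: "box lam (a, j0)" using assms box_iff_height by simp
  hence al: "a < length lam" "j0 < lam ! a" unfolding box_def by auto
  have "0 < size_shape" using box_col_less[OF b] by simp
  moreover have "(0 < lam ! a - Suc j0) \<longleftrightarrow> a < height (Suc j0)"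
    using box_iff_height[of a "Suc j0"] al unfolding box_def by auto
  ultimately show ?thesis unfolding row_key_def right_entry_def by simp
qed

lemma row_key_nonempty:
  assumes "a < height j0"
  shows "row_key \<tau>' j0 a \<noteq> []"
proof -
  have "box lam (a, j0)" using assms box_iff_height by simp
  hence "0 < size_shape" using box_col_less by fastforce
  thus ?thesis unfolding row_key_def by simp
qed

lemma sorted_right_entry: "sorted (map (right_entry \<tau>' j0) (row_order \<tau>' j0))"
  unfolding sorted_iff_nth_mono
proof (intro allI impI)
  fix p q assume pq: "p \<le> q" "q < length (map (right_entry \<tau>' j0) (row_order \<tau>' j0))"
  hence q: "q < height j0" using length_row_order by simp
  have p: "p < height j0" using pq q by simp
  have "rank_key \<tau>' j0 (row_order \<tau>' j0 ! p) \<le> rank_key \<tau>' j0 (row_order \<tau>' j0 ! q)"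
    using row_order_strict_mono[of p q j0 \<tau>'] q pq(1) by (cases "p = q") auto
  hence "row_key \<tau>' j0 (row_order \<tau>' j0 ! p) \<le> row_key \<tau>' j0 (row_order \<tau>' j0 ! q)"
    unfolding rank_key_def by (auto simp: less_eq_prod_def)
  hence "row_key \<tau>' j0 (row_order \<tau>' j0 ! p) ! 0 \<le> row_key \<tau>' j0 (row_order \<tau>' j0 ! q) ! 0"
    using list_le_hd row_key_nonempty row_order_less p q by blast
  thus "map (right_entry \<tau>' j0) (row_order \<tau>' j0) ! p \<le> map (right_entry \<tau>' j0) (row_order \<tau>' j0) ! q"
    using row_key_hd row_order_less p q length_row_order by simp
qed

text \<open>Rows are sorted by keys beginning with their right neighbour, so reading the right
  neighbours in row order sorts them; as multisets they are those of T.\<close>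

lemma right_entry_row_order:
  assumes t': "\<tau>' \<in> col_fillings (Suc j0)"
  shows "map (right_entry \<tau>' j0) (row_order \<tau>' j0) = col_bounds j0"
proof -
  have m: "mset (map (right_entry \<tau>' j0) (row_order \<tau>' j0)) = mset (map (right_entry \<tau>' j0) [0..<height j0])"
    unfolding row_order_def by simp
  have hm: "height (Suc j0) \<le> height j0" by (rule height_Suc_le)
  have "[0..<height j0] = [0..<height (Suc j0)] @ [height (Suc j0)..<height j0]"
    using hm by (metis le0 upt_add_eq_append le_add_diff_inverse)
  moreover have "map (right_entry \<tau>' j0) [height (Suc j0)..<height j0] = map (\<lambda>_. sentinel) [height (Suc j0)..<height j0]"
    by (rule map_cong) (auto simp: right_entry_def)
  ultimately have "map (right_entry \<tau>' j0) [0..<height j0] = column \<tau>' (Suc j0) @ replicate (height j0 - height (Suc j0)) sentinel"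
    unfolding column_def by (simp add: map_replicate_const right_entry_def)
  hence "mset (map (right_entry \<tau>' j0) (row_order \<tau>' j0)) = mset (column T (Suc j0) @ replicate (height j0 - height (Suc j0)) sentinel)"
    using m t' unfolding col_fillings_def by simp
  thus ?thesis unfolding col_bounds_def by (metis properties_for_sort sorted_right_entry)
qed

lemma length_col_bounds: "length (col_bounds j0) = height j0"
  unfolding col_bounds_def column_def using height_Suc_le[of j0] by simp

lemma sorted_col_bounds: "sorted (col_bounds j0)"
  unfolding col_bounds_def by simp

lemma map_row_pos: "map (\<lambda>a. w ! row_pos \<tau>' j0 a) (row_order \<tau>' j0) = w" if "length w = height j0"
proof (rule nth_equalityI)
  show "length (map (\<lambda>a. w ! row_pos \<tau>' j0 a) (row_order \<tau>' j0)) = length w" using that length_row_order by simp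
  fix p assume "p < length (map (\<lambda>a. w ! row_pos \<tau>' j0 a) (row_order \<tau>' j0))"
  hence p: "p < height j0" using length_row_order by simp
  show "map (\<lambda>a. w ! row_pos \<tau>' j0 a) (row_order \<tau>' j0) ! p = w ! p" using row_pos_row_order[OF p] p length_row_order by simp
qed

lemma col_inv_eq_inversions:
  assumes vb: "\<forall>c. \<tau> c < sentinel" and agree: "\<forall>i j. Suc j0 \<le> j \<longrightarrow> \<tau> (i, j) = \<tau>' (i, j)"
  shows "col_inv j0 \<tau> = inversions (map (\<lambda>a. \<tau> (a, j0)) (row_order \<tau>' j0))"
proof -
  let ?K = "rank_key \<tau>' j0"
  let ?P = "{(a, b). a \<in> set (row_order \<tau>' j0) \<and> b \<in> set (row_order \<tau>' j0)
              \<and> \<tau> (a, j0) < \<tau> (b, j0) \<and> ?K b < ?K a}"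
  have iff: "inv_pair lam \<tau> (a, j0) (b, j0) \<longleftrightarrow> \<tau> (a, j0) < \<tau> (b, j0) \<and> ?K b < ?K a"
    if "a < height j0" "b < height j0" for a b
  proof (cases "a = b")
    case False
    thus ?thesis using inv_pair_iff_row_key[OF vb that False] row_key_cong[OF agree]
      unfolding rank_key_def by simp
  qed (simp add: inv_pair_def)
  have in_col: "\<exists>a b. c = (a, j0) \<and> c' = (b, j0) \<and> a < height j0 \<and> b < height j0"
    if "inv_pair lam \<tau> c c'" "snd c = j0" for c c'
    using that box_iff_height by (cases c, cases c') (auto simp: inv_pair_def)
  have "{(c, c'). inv_pair lam \<tau> c c' \<and> snd c = j0} = (\<lambda>(a, b). ((a, j0), (b, j0))) ` ?P"
  proof (intro set_eqI iffI)
    fix cc assume "cc \<in> {(c, c'). inv_pair lam \<tau> c c' \<and> snd c = j0}"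
    then obtain c c' where cc: "cc = (c, c')" "inv_pair lam \<tau> c c'" "snd c = j0" by auto
    then obtain a b where "c = (a, j0)" "c' = (b, j0)" "a < height j0" "b < height j0"
      using in_col by blast
    thus "cc \<in> (\<lambda>(a, b). ((a, j0), (b, j0))) ` ?P" using iff set_row_order cc by force
  next
    fix cc assume "cc \<in> (\<lambda>(a, b). ((a, j0), (b, j0))) ` ?P"
    thus "cc \<in> {(c, c'). inv_pair lam \<tau> c c' \<and> snd c = j0}" using iff set_row_order by auto
  qed
  moreover have "inj_on (\<lambda>(a, b). ((a, j0), (b, j0))) ?P" by (auto simp: inj_on_def)
  ultimately have "col_inv j0 \<tau> = card ?P" unfolding col_inv_def by (simp add: card_image)
  also have "\<dots> = inversions (map (\<lambda>a. \<tau> (a, j0)) (row_order \<tau>' j0))"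
    by (rule inversions_map_sorted_key[symmetric]) (rule sorted_wrt_row_order)
  finally show ?thesis .
qed

definition read_col :: "(nat \<times> nat \<Rightarrow> nat) \<Rightarrow> nat \<Rightarrow> (nat \<times> nat \<Rightarrow> nat) \<Rightarrow> nat list" where
  "read_col \<tau>' j0 \<tau> = map (\<lambda>a. \<tau> (a, j0)) (row_order \<tau>' j0)"

definition write_col :: "(nat \<times> nat \<Rightarrow> nat) \<Rightarrow> nat \<Rightarrow> nat list \<Rightarrow> (nat \<times> nat \<Rightarrow> nat)" where
  "write_col \<tau>' j0 w = (\<lambda>(a, j). if j = j0 then (if a < height j0 then w ! row_pos \<tau>' j0 a else 0) else \<tau>' (a, j))"

lemma col_bounds_nth:
  assumes "\<tau>' \<in> col_fillings (Suc j0)" "p < height j0"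
  shows "col_bounds j0 ! p = right_entry \<tau>' j0 (row_order \<tau>' j0 ! p)"
  using right_entry_row_order[OF assms(1)] assms(2) length_row_order by (metis nth_map)

lemma read_col_in_bounded_words:
  assumes t: "\<tau> \<in> col_fillings j0" and ct: "erase_col j0 \<tau> = \<tau>'"
  shows "read_col \<tau>' j0 \<tau> \<in> bounded_words (col_bounds j0) (mset (column T j0))"
    and "inversions (read_col \<tau>' j0 \<tau>) = col_inv j0 \<tau>"
    and "write_col \<tau>' j0 (read_col \<tau>' j0 \<tau>) = \<tau>"
proof -
  let ?R = "row_order \<tau>' j0"
  have t': "\<tau>' \<in> col_fillings (Suc j0)" using erase_col_in_col_fillings[OF t] ct by simp
  have agree: "\<tau> (a, j) = \<tau>' (a, j)" if "j \<noteq> j0" for a j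
    using fun_cong[OF ct, of "(a, j)"] that unfolding erase_col_def by simp
  show "inversions (read_col \<tau>' j0 \<tau>) = col_inv j0 \<tau>"
    unfolding read_col_def using col_fillings_less_sentinel[OF t] agree
    by (intro col_inv_eq_inversions[symmetric]) auto
  have "mset (read_col \<tau>' j0 \<tau>) = mset (column T j0)"
    using col_fillingsD(3)[OF t, of j0] unfolding read_col_def row_order_def column_def by simp
  moreover have "read_col \<tau>' j0 \<tau> ! p < col_bounds j0 ! p" if p: "p < height j0" for p
  proof (cases "?R ! p < height (Suc j0)")
    case True
    hence "\<tau> (?R ! p, j0) < \<tau> (?R ! p, Suc j0)"
      using col_fillingsD(2)[OF t] box_iff_height by blast
    thus ?thesis
      using col_bounds_nth[OF t' p] True agree[of "Suc j0"] p length_row_order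
      unfolding right_entry_def read_col_def by simp
  next
    case False
    thus ?thesis using col_bounds_nth[OF t' p] col_fillings_less_sentinel[OF t] p length_row_order
      unfolding right_entry_def read_col_def by simp
  qed
  ultimately show "read_col \<tau>' j0 \<tau> \<in> bounded_words (col_bounds j0) (mset (column T j0))"
    using length_row_order length_col_bounds unfolding bounded_words_def read_col_def by auto
  show "write_col \<tau>' j0 (read_col \<tau>' j0 \<tau>) = \<tau>"
  proof (rule ext, clarify)
    fix a j
    show "write_col \<tau>' j0 (read_col \<tau>' j0 \<tau>) (a, j) = \<tau> (a, j)"
      using row_order_row_pos[of a j0 \<tau>'] length_row_order agree[of j a]
        col_fillingsD(1)[OF t, of a j] box_iff_height[of a j]
      unfolding write_col_def read_col_def by auto
  qed
qed

lemma read_col_write_col: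
  assumes "length w = height j0"
  shows "read_col \<tau>' j0 (write_col \<tau>' j0 w) = w"
proof -
  have "read_col \<tau>' j0 (write_col \<tau>' j0 w) = map (\<lambda>a. w ! row_pos \<tau>' j0 a) (row_order \<tau>' j0)"
    unfolding read_col_def write_col_def by (rule map_cong) (use row_order_less set_row_order in auto)
  thus ?thesis using map_row_pos[OF assms] by simp
qed

lemma erase_col_write_col: "\<tau>' \<in> col_fillings (Suc j0) \<Longrightarrow> erase_col j0 (write_col \<tau>' j0 w) = \<tau>'"
  using col_fillingsD(1) by (auto simp: fun_eq_iff erase_col_def write_col_def)

lemma write_col_in_col_fillings:
  assumes t': "\<tau>' \<in> col_fillings (Suc j0)"
    and w: "w \<in> bounded_words (col_bounds j0) (mset (column T j0))"
  shows "write_col \<tau>' j0 w \<in> col_fillings j0"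
proof -
  let ?\<tau> = "write_col \<tau>' j0 w"
  have lw: "length w = height j0" and mw: "mset w = mset (column T j0)"
    and bw: "\<forall>p<height j0. w ! p < col_bounds j0 ! p"
    using w length_col_bounds unfolding bounded_words_def by auto
  show "?\<tau> \<in> col_fillings j0" unfolding col_fillings_def
  proof (intro CollectI conjI allI impI)
    fix a j assume "\<not> box lam (a, j) \<or> j < j0"
    thus "?\<tau> (a, j) = 0" using col_fillingsD(1)[OF t'] box_iff_height
      unfolding write_col_def by auto
  next
    fix a j assume j: "j0 \<le> j" and b: "box lam (a, Suc j)"
    show "?\<tau> (a, j) < ?\<tau> (a, Suc j)"
    proof (cases "j = j0")
      case True
      hence a1: "a < height (Suc j0)" using b box_iff_height by simp
      hence a: "a < height j0" using height_Suc_le order.strict_trans2 by blast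
      note pos = row_order_row_pos[OF a, of \<tau>']
      have "w ! row_pos \<tau>' j0 a < col_bounds j0 ! row_pos \<tau>' j0 a" using bw pos by simp
      also have "\<dots> = \<tau>' (a, Suc j0)"
        using col_bounds_nth[OF t'] pos a1 unfolding right_entry_def by simp
      finally show ?thesis using True a unfolding write_col_def by simp
    qed (use col_fillingsD(2)[OF t'] j b in \<open>simp add: write_col_def\<close>)
  next
    fix j assume j: "j0 \<le> j"
    show "mset (column ?\<tau> j) = mset (column T j)"
    proof (cases "j = j0")
      case True
      have "column ?\<tau> j0 = map (\<lambda>a. w ! row_pos \<tau>' j0 a) [0..<height j0]"
        unfolding column_def write_col_def by simp
      hence "mset (column ?\<tau> j0) = mset (map (\<lambda>a. w ! row_pos \<tau>' j0 a) (row_order \<tau>' j0))"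
        unfolding row_order_def by simp
      thus ?thesis using map_row_pos[OF lw] mw True by simp
    next
      case False
      hence "column ?\<tau> j = column \<tau>' j" unfolding column_def write_col_def by simp
      thus ?thesis using col_fillingsD(3)[OF t'] False j by simp
    qed
  qed
qed

lemma col_fillings_fiber_card:
  assumes t': "\<tau>' \<in> col_fillings (Suc j0)"
  shows "card {\<tau> \<in> col_fillings j0. erase_col j0 \<tau> = \<tau>' \<and> inv_from j0 \<tau> = inv_from (Suc j0) \<tau>' + i}
       = stat_dist (bounded_words (col_bounds j0) (mset (column T j0))) inversions i"
proof -
  let ?A = "{\<tau> \<in> col_fillings j0. erase_col j0 \<tau> = \<tau>' \<and> inv_from j0 \<tau> = inv_from (Suc j0) \<tau>' + i}"
  let ?W = "{w \<in> bounded_words (col_bounds j0) (mset (column T j0)). inversions w = i}"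
  have col_inv: "col_inv j0 \<tau> = inv_from j0 \<tau> - inv_from (Suc j0) \<tau>'" if "erase_col j0 \<tau> = \<tau>'" for \<tau>
    using inv_from_split[of j0 \<tau>] that by simp
  have "bij_betw (read_col \<tau>' j0) ?A ?W"
  proof (rule bij_betw_byWitness[where f'="write_col \<tau>' j0"])
    show "\<forall>\<tau>\<in>?A. write_col \<tau>' j0 (read_col \<tau>' j0 \<tau>) = \<tau>"
      using read_col_in_bounded_words(3) by blast
    show "\<forall>w\<in>?W. read_col \<tau>' j0 (write_col \<tau>' j0 w) = w"
      using read_col_write_col length_col_bounds unfolding bounded_words_def by auto
    show "read_col \<tau>' j0 ` ?A \<subseteq> ?W"
      using read_col_in_bounded_words(1,2) col_inv by auto
    show "write_col \<tau>' j0 ` ?W \<subseteq> ?A"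
    proof (rule image_subsetI)
      fix w assume "w \<in> ?W"
      hence w: "w \<in> bounded_words (col_bounds j0) (mset (column T j0))" "inversions w = i" by auto
      have filling: "write_col \<tau>' j0 w \<in> col_fillings j0" "erase_col j0 (write_col \<tau>' j0 w) = \<tau>'"
        using write_col_in_col_fillings[OF t' w(1)] erase_col_write_col[OF t'] by blast+
      have "length w = height j0" using w(1) length_col_bounds unfolding bounded_words_def by simp
      hence "col_inv j0 (write_col \<tau>' j0 w) = inversions w"
        using read_col_in_bounded_words(2)[OF filling] read_col_write_col by simp
      thus "write_col \<tau>' j0 w \<in> ?A"
        using filling inv_from_split[of j0 "write_col \<tau>' j0 w"] w(2) by simp
    qed
  qed
  thus ?thesis unfolding stat_dist_def by (rule bij_betw_same_card)
qed

lemma stat_dist_erase_col: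
  "stat_dist (col_fillings j0) (inv_from j0) k = (\<Sum>j\<le>k.
     stat_dist (col_fillings (Suc j0)) (inv_from (Suc j0)) j
     * stat_dist (bounded_words (col_bounds j0) (mset (column T j0))) inversions (k - j))"
proof (rule stat_dist_fibration[where f="erase_col j0"])
  fix \<tau> assume "\<tau> \<in> col_fillings j0"
  thus "erase_col j0 \<tau> \<in> col_fillings (Suc j0)" by (rule erase_col_in_col_fillings)
  show "inv_from (Suc j0) (erase_col j0 \<tau>) \<le> inv_from j0 \<tau>" using inv_from_split[of j0 \<tau>] by simp
next
  fix \<tau>' i assume "\<tau>' \<in> col_fillings (Suc j0)"
  thus "card {\<tau> \<in> col_fillings j0. erase_col j0 \<tau> = \<tau>' \<and> inv_from j0 \<tau> = inv_from (Suc j0) \<tau>' + i}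
      = stat_dist (bounded_words (col_bounds j0) (mset (column T j0))) inversions i"
    by (rule col_fillings_fiber_card)
qed (rule finite_col_fillings)+

lemma col_fillings_palindromic:
  "j0 \<le> size_shape \<Longrightarrow> \<exists>d. palindromic (stat_dist (col_fillings j0) (inv_from j0)) d"
proof (induction "size_shape - j0" arbitrary: j0)
  case 0
  hence j0: "j0 = size_shape" by simp
  have "palindromic (stat_dist (col_fillings j0) (inv_from j0)) 0"
    unfolding j0 palindromic_def stat_dist_def col_fillings_beyond inv_from_beyond by simp
  thus ?case by blast
next
  case (Suc k)
  have "k = size_shape - Suc j0" "Suc j0 \<le> size_shape" using Suc.hyps(2) by arith+
  then obtain d where d: "palindromic (stat_dist (col_fillings (Suc j0)) (inv_from (Suc j0))) d"
    using Suc.hyps(1) by blast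
  obtain e where e: "palindromic (stat_dist (bounded_words (col_bounds j0) (mset (column T j0))) inversions) e"
    using bounded_words_palindromic[OF sorted_col_bounds] by blast
  have "stat_dist (col_fillings j0) (inv_from j0) = (\<lambda>k. \<Sum>j\<le>k.
     stat_dist (col_fillings (Suc j0)) (inv_from (Suc j0)) j
     * stat_dist (bounded_words (col_bounds j0) (mset (column T j0))) inversions (k - j))"
    by (rule ext) (rule stat_dist_erase_col)
  thus ?case using palindromic_convolution[OF d e] by auto
qed

lemma card_column_eq_count: "card {i. i < height j \<and> \<tau> (i, j) = v} = count (mset (column \<tau> j)) v"
proof -
  have "count (mset (column \<tau> j)) v = length (filter (\<lambda>y. v = y) (column \<tau> j))"
    by (simp add: count_mset count_list_eq_length_filter)
  also have "\<dots> = card {i. i < length (column \<tau> j) \<and> v = column \<tau> j ! i}"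
    by (rule length_filter_conv_card)
  also have "{i. i < length (column \<tau> j) \<and> v = column \<tau> j ! i} = {i. i < height j \<and> \<tau> (i, j) = v}"
    unfolding column_def by auto
  finally show ?thesis by simp
qed

lemma card_boxes_with_value:
  "card {c. box lam c \<and> \<tau> c = v} = (\<Sum>j<size_shape. count (mset (column \<tau> j)) v)"
proof -
  have "{c. box lam c \<and> \<tau> c = v} = (\<Union>j<size_shape. (\<lambda>i. (i, j)) ` {i. i < height j \<and> \<tau> (i, j) = v})"
    using box_iff_height box_col_less by fastforce
  hence "card {c. box lam c \<and> \<tau> c = v} = (\<Sum>j<size_shape. card ((\<lambda>i. (i, j)) ` {i. i < height j \<and> \<tau> (i, j) = v}))"
    by (simp only:) (rule card_UN_disjoint, auto)
  also have "\<dots> = (\<Sum>j<size_shape. card {i. i < height j \<and> \<tau> (i, j) = v})"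
    by (rule sum.cong) (auto simp: card_image inj_on_def)
  finally show ?thesis using card_column_eq_count by simp
qed

lemma T_in_col_fillings: "T \<in> col_fillings 0"
proof -
  have "\<forall>c. \<not> box lam c \<longrightarrow> T c = 0" using T_filling unfolding fillings_def by blast
  thus ?thesis using T_row_standard unfolding col_fillings_def row_standard_def by auto
qed

lemma sort_column_eq_column_T: "\<tau> \<in> col_fillings 0 \<Longrightarrow> sort (column \<tau> j) = column T j"
  using col_fillingsD(3) sorted_column_T by (intro properties_for_sort) auto

lemma col_fillings_0_in_fillings:
  assumes t: "\<tau> \<in> col_fillings 0"
  shows "\<tau> \<in> fillings lam mu"
proof -
  have T_vals: "\<forall>c. box lam c \<longrightarrow> T c \<in> {1..length mu}"
    and T_count: "\<forall>v\<in>{1..length mu}. card {c. box lam c \<and> T c = v} = mu ! (v - 1)"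
    using T_filling unfolding fillings_def by blast+
  have "\<tau> (i, j) \<in> {1..length mu}" if b: "box lam (i, j)" for i j
  proof -
    have "\<tau> (i, j) \<in> set (column \<tau> j)" using b box_iff_height unfolding column_def by simp
    also have "set (column \<tau> j) = set (column T j)"
      using arg_cong[OF col_fillingsD(3)[OF t, of j], of set_mset] by simp
    finally obtain i' where "i' < height j" "\<tau> (i, j) = T (i', j)" unfolding column_def by auto
    thus ?thesis using T_vals box_iff_height by auto
  qed
  moreover have "card {c. box lam c \<and> \<tau> c = v} = card {c. box lam c \<and> T c = v}" for v
    unfolding card_boxes_with_value using col_fillingsD(3)[OF t] by simp
  ultimately show ?thesis
    using col_fillingsD(1)[OF t] T_count unfolding fillings_def by auto
qed

lemma col_fillings_0_iff:
  "\<tau> \<in> col_fillings 0 \<longleftrightarrow> \<tau> \<in> fillings lam mu \<and> row_standard lam \<tau> \<and> st lam \<tau> = T"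
proof
  assume t: "\<tau> \<in> col_fillings 0"
  have "st lam \<tau> = T"
  proof (rule ext, clarify)
    fix i j
    have "\<not> box lam (i, j) \<Longrightarrow> T (i, j) = 0" using T_filling unfolding fillings_def by blast
    thus "st lam \<tau> (i, j) = T (i, j)"
      using sort_column_eq_column_T[OF t, of j] box_iff_height[of i j] unfolding st_def column_def by auto
  qed
  thus "\<tau> \<in> fillings lam mu \<and> row_standard lam \<tau> \<and> st lam \<tau> = T"
    using col_fillings_0_in_fillings[OF t] col_fillingsD(2)[OF t] unfolding row_standard_def by simp
next
  assume a: "\<tau> \<in> fillings lam mu \<and> row_standard lam \<tau> \<and> st lam \<tau> = T"
  have "column T j = sort (column \<tau> j)" for j
  proof (rule nth_equalityI)
    fix i assume "i < length (column T j)"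
    hence "i < height j" unfolding column_def by simp
    thus "column T j ! i = sort (column \<tau> j) ! i"
      using a box_iff_height unfolding st_def column_def by auto
  qed (simp add: column_def)
  thus "\<tau> \<in> col_fillings 0" using a unfolding col_fillings_def fillings_def row_standard_def by auto
qed

lemma S_k_T_eq: "S_k_T lam mu T k = {\<tau> \<in> col_fillings 0. inv_from 0 \<tau> = k}"
  unfolding S_k_T_def S_k_def col_fillings_0_iff inv_from_def inv_count_def by auto

lemma row_key_T_mono:
  assumes "a < b" "b < height j"
  shows "row_key T j a \<le> row_key T j b"
proof (rule list_le_pointwise)
  have ab: "a < length lam" "b < length lam" "lam ! b \<le> lam ! a"
    using assms shape_antimono[of a b] height_le_length[of j] by auto
  show "\<forall>r<length (row_key T j a). row_key T j a ! r \<le> row_key T j b ! r"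
  proof (intro allI impI)
    fix r assume "r < length (row_key T j a)"
    hence r: "r < size_shape" unfolding row_key_def by simp
    show "row_key T j a ! r \<le> row_key T j b ! r"
    proof (cases "r < lam ! b - Suc j")
      case True
      hence "box lam (b, Suc j + r)" using ab unfolding box_def by simp
      hence "b < height (Suc j + r)" using box_iff_height by blast
      moreover have "r < lam ! a - Suc j" using True ab by simp
      ultimately show ?thesis
        using True r assms sorted_nth_mono[OF sorted_column_T, of a b "Suc j + r"]
        unfolding row_key_def column_def by simp
    qed (use r T_less_sentinel in \<open>simp add: row_key_def less_imp_le\<close>)
  qed
qed (simp add: row_key_def)

lemma T_no_inversions: "inv_from 0 T = 0"
proof -
  have "\<not> inv_pair lam T (a, j) (b, j')" for a b j j'
  proof
    assume ip: "inv_pair lam T (a, j) (b, j')"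
    hence bx: "a < height j" "b < height j" "j' = j" "a \<noteq> b" "T (a, j) < T (b, j)"
      unfolding inv_pair_def using box_iff_height by auto
    have "a < b"
    proof (rule ccontr)
      assume "\<not> a < b"
      hence "T (b, j) \<le> T (a, j)"
        using sorted_nth_mono[OF sorted_column_T, of b a j] bx(1) unfolding column_def by simp
      thus False using bx(5) by simp
    qed
    hence "\<not> (row_key T j b, b) < (row_key T j a, a)"
      using row_key_T_mono[OF _ bx(2)] by (auto simp: less_prod_def' dest: leD)
    moreover have "inv_pair lam T (a, j) (b, j) \<longleftrightarrow> T (a, j) < T (b, j) \<and> (row_key T j b, b) < (row_key T j a, a)"
      using T_less_sentinel by (intro inv_pair_iff_row_key[OF _ bx(1,2,4)]) blast
    ultimately show False using ip bx(3) by simp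
  qed
  hence "\<not> inv_pair lam T c c'" for c c' by (metis prod.collapse)
  thus ?thesis unfolding inv_from_def by simp
qed

lemma card_boxes_le: "card {c. box lam c} \<le> size_shape"
proof -
  have "{c. box lam c} = (\<Union>i<length lam. (\<lambda>j. (i, j)) ` {..<lam ! i})"
    unfolding box_def by auto
  hence "card {c. box lam c} \<le> (\<Sum>i<length lam. card ((\<lambda>j. (i, j)) ` {..<lam ! i}))"
    using card_UN_le[of "{..<length lam}"] by simp
  also have "\<dots> = (\<Sum>i<length lam. lam ! i)"
    by (rule sum.cong) (auto simp: card_image inj_on_def)
  also have "\<dots> = size_shape" unfolding size_shape_def by (simp add: sum_list_sum_nth atLeast0LessThan)
  finally show ?thesis .
qed

lemma inv_count_le: "inv_count lam \<tau> \<le> size_shape ^ 2"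
proof -
  have "inv_count lam \<tau> \<le> card ({c. box lam c} \<times> {c. box lam c})"
    unfolding inv_count_def by (rule card_mono) (use finite_boxes inv_pair_box in auto)
  also have "\<dots> \<le> size_shape ^ 2"
    using card_boxes_le by (simp add: card_cartesian_product power2_eq_square mult_le_mono)
  finally show ?thesis .
qed

lemma coeff_chi: "coeff (chi lam mu T) k = card (S_k_T lam mu T k)"
proof -
  have "coeff (chi lam mu T) k = (if k \<le> size_shape ^ 2 then card (S_k_T lam mu T k) else 0)"
    unfolding chi_def coeff_sum coeff_monom size_shape_def by (simp add: sum.delta)
  moreover have "S_k_T lam mu T k = {}" if "size_shape ^ 2 < k"
  proof -
    have "inv_count lam \<tau> \<noteq> k" for \<tau> using inv_count_le[of \<tau>] that by simp
    thus ?thesis unfolding S_k_T_def S_k_def by simp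
  qed
  ultimately show ?thesis by auto
qed

end

theorem mainTheorem5:
  fixes lam mu :: "nat list" and T :: "nat \<times> nat \<Rightarrow> nat"
  assumes "is_shape lam" and "is_content lam mu" and "T \<in> SSYT lam mu"
  shows "\<forall>k \<le> degree (chi lam mu T).
           card (S_k_T lam mu T k) = card (S_k_T lam mu T (degree (chi lam mu T) - k))"
proof -
  interpret tableau lam mu T using assms(1,3) by unfold_locales
  have coeff: "coeff (chi lam mu T) = stat_dist (col_fillings 0) (inv_from 0)"
    unfolding coeff_chi stat_dist_def S_k_T_eq ..
  obtain d where d: "palindromic (coeff (chi lam mu T)) d"
    using col_fillings_palindromic[of 0] unfolding coeff by auto
  have "T \<in> S_k_T lam mu T 0" using T_in_col_fillings T_no_inversions S_k_T_eq by simp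
  hence "coeff (chi lam mu T) 0 \<noteq> 0"
    using finite_col_fillings unfolding coeff_chi S_k_T_eq by (auto simp: card_eq_0_iff)
  hence deg: "degree (chi lam mu T) = d" by (rule degree_eq_palindromic_center[OF d])
  show ?thesis
  proof (intro allI impI)
    fix k assume "k \<le> degree (chi lam mu T)"
    thus "card (S_k_T lam mu T k) = card (S_k_T lam mu T (degree (chi lam mu T) - k))"
      using palindromic_sym[OF d, of k] unfolding deg coeff_chi by simp
  qed
qed

end
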